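(* Consider a node resource $(\tau,u)\in R^V_S$. Let $0<\varepsilon\le1$ be such that $d_{\max}(r,\tau,u)/d_S(\tau,u)\le\varepsilon$ for all $r\in\mathcal R$. Let $\Delta=\sum_{r\in\mathcal R}\big(A_{\max}(r,\tau,u)/d_{\max}(r,\tau,u)\big)^2$ and $\beta=1+\varepsilon\sqrt{2\Delta\log(|V_S|\cdot|\mathcal T|)}$. Then $\mathbb P\big(A_{\tau,u}\ge\beta\cdot d_S(\tau,u)\big)\le(|V_S|\cdot|\mathcal T|)^{-4}$.
   Context: Substrate: directed graph $G_S=(V_S,E_S)$, node types $\mathcal T$, $V_S^\tau\subseteq V_S$, node resources $R^V_S=\{(\tau,u):u\in V_S^\tau\}$, resources $R_S=R^V_S\cup E_S$, capacities $d_S(x,y)>0$. Requests $r\in\mathcal R$: directed graph $G_r=(V_r,E_r)$, types $\tau_r$, demands $d_r(i),d_r(i,j)\ge0$, allowed node sets $V_S^{r,i}\subseteq V_S^{\tau_r(i)}$, allowed edge sets $E_S^{r,i,j}\subseteq E_S$. Valid mappings $m_r$ (each node $i$ to a node of $V_S^{r,i}$, each edge $(i,j)$ to a directed path between the images within $E_S^{r,i,j}$), set $\mathcal M_r$; allocation $A(m_r,\tau,u)=\sum_{i:\tau_r(i)=\tau,m^V_r(i)=u}d_r(i)$, $A(m_r,u,v)=\sum_{(i,j):(u,v)\in m^E_r(i,j)}d_r(i,j)$; $d_{\max}(r,\tau,u)=\max_{i:u\in V_S^{r,i}}d_r(i)$; $A_{\max}(r,x,y)=\max_{m\in\mathcal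 M_r}A(m,x,y)$. Rounding setting (profit variant): for each request $r$ a finite family $\mathcal D_r=\{(f^k_r,m^k_r)\}_k$ with $f^k_r>0$, $m^k_r\in\mathcal M_r$, $\sum_kf^k_r\le1$, obtained by decomposing a feasible solution of the paper's decomposable LP relaxation of the VNEP, so that in particular $\sum_{r\in\mathcal R}\sum_kf^k_rA(m^k_r,x,y)\le d_S(x,y)$ for all $(x,y)\in R_S$. Independently for each $r$, mapping $m^k_r$ is selected with probability $f^k_r$ and no mapping with probability $1-\sum_kf^k_r$; $A_{r,x,y}$ is the allocation of the selected mapping on $(x,y)$ (0 if none) and $A_{x,y}=\sum_rA_{r,x,y}$. *)

theory Defs
  imports "HOL-Probability.Probability"
begin

text \<open>A mapping of a request: node mapping and, for each request edge, a directed
  substrate path given as its vertex sequence.\<close>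
type_synonym ('i,'v) vmapping = "('i \<Rightarrow> 'v) \<times> ('i \<times> 'i \<Rightarrow> 'v list)"

definition path_edges :: "'v list \<Rightarrow> ('v \<times> 'v) set" where
  "path_edges vs = set (zip vs (tl vs))"

definition is_dpath :: "('v \<times> 'v) set \<Rightarrow> 'v \<Rightarrow> 'v \<Rightarrow> 'v list \<Rightarrow> bool" where
  "is_dpath E s t vs \<longleftrightarrow> vs \<noteq> [] \<and> hd vs = s \<and> last vs = t \<and> distinct vs
     \<and> path_edges vs \<subseteq> E"

definition valid_mapping ::
  "'i set \<Rightarrow> ('i \<times> 'i) set \<Rightarrow> ('i \<Rightarrow> 'v set) \<Rightarrow> ('i \<times> 'i \<Rightarrow> ('v \<times> 'v) set)
     \<Rightarrow> ('i,'v) vmapping \<Rightarrow> bool" where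
  "valid_mapping Vr Er Vallow Eallow m \<longleftrightarrow>
     (\<forall>i\<in>Vr. fst m i \<in> Vallow i) \<and>
     (\<forall>(i,j)\<in>Er. is_dpath (Eallow (i,j)) (fst m i) (fst m j) (snd m (i,j)))"

definition alloc_node ::
  "'i set \<Rightarrow> ('i \<Rightarrow> 't) \<Rightarrow> ('i \<Rightarrow> real) \<Rightarrow> ('i,'v) vmapping \<Rightarrow> 't \<Rightarrow> 'v \<Rightarrow> real" where
  "alloc_node Vr tr d m \<tau> u = (\<Sum>i\<in>{i\<in>Vr. tr i = \<tau> \<and> fst m i = u}. d i)"

definition alloc_edge ::
  "('i \<times> 'i) set \<Rightarrow> ('i \<times> 'i \<Rightarrow> real) \<Rightarrow> ('i,'v) vmapping \<Rightarrow> 'v \<Rightarrow> 'v \<Rightarrow> real" where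
  "alloc_edge Er de m u v = (\<Sum>e\<in>{e\<in>Er. (u,v) \<in> path_edges (snd m e)}. de e)"

text \<open>d_max(r,tau,u) = max over request nodes i with u allowed for i of d_r(i);
  convention: 0 if there is no such node.\<close>
definition dmax :: "'i set \<Rightarrow> ('i \<Rightarrow> 'v set) \<Rightarrow> ('i \<Rightarrow> real) \<Rightarrow> 'v \<Rightarrow> real" where
  "dmax Vr Vallow d u =
     (if {i\<in>Vr. u \<in> Vallow i} = {} then 0 else Max (d ` {i\<in>Vr. u \<in> Vallow i}))"

text \<open>A_max(r,tau,u) = max over valid mappings of the node allocation;
  convention: 0 if there is no valid mapping.\<close>
definition Amax_node ::
  "'i set \<Rightarrow> ('i \<times> 'i) set \<Rightarrow> ('i \<Rightarrow> 'v set) \<Rightarrow> ('i \<times> 'i \<Rightarrow> ('v \<times> 'v) set)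
     \<Rightarrow> ('i \<Rightarrow> 't) \<Rightarrow> ('i \<Rightarrow> real) \<Rightarrow> 't \<Rightarrow> 'v \<Rightarrow> real" where
  "Amax_node Vr Er Vallow Eallow tr d \<tau> u =
     (let M = {m. valid_mapping Vr Er Vallow Eallow m} in
      if M = {} then 0 else Sup ((\<lambda>m. alloc_node Vr tr d m \<tau> u) ` M))"

text \<open>Selection distribution for one request: Some k with probability f k (k in K),
  None with the remaining probability.\<close>
definition selection_pmf :: "'k set \<Rightarrow> ('k \<Rightarrow> real) \<Rightarrow> 'k option pmf" where
  "selection_pmf K f = embed_pmf (\<lambda>x. case x of
       None \<Rightarrow> 1 - (\<Sum>k\<in>K. f k)
     | Some k \<Rightarrow> (if k \<in> K then f k else 0))"

end

(*
  Each request contributes an independent summand, the allocation of its randomly selected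
  mapping on (tau, u), which lies in [0, A_max(r, tau, u)]; the capacity constraint of the LP
  bounds the expected total by d_S(tau, u). Because d_max(r, tau, u) <= eps d_S(tau, u), the
  squared ranges sum to at most Delta (eps d_S(tau, u))^2, so Hoeffding's inequality for the
  deviation eps d_S(tau, u) sqrt(2 Delta log N) yields exp(-4 log N) = N^-4. When Delta = 0 all
  summands vanish and the event is empty.
*)

theory Submission
  imports Defs
begin

lemma pmf_selection_pmf:
  assumes "finite K" and "\<And>k. k \<in> K \<Longrightarrow> f k \<ge> 0" and "(\<Sum>k\<in>K. f k) \<le> 1"
  shows "pmf (selection_pmf K f) x =
    (case x of None \<Rightarrow> 1 - (\<Sum>k\<in>K. f k) | Some k \<Rightarrow> if k \<in> K then f k else 0)"
  unfolding selection_pmf_def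
proof (rule pmf_embed_pmf)
  let ?h = "\<lambda>x. case x of None \<Rightarrow> 1 - (\<Sum>k\<in>K. f k) | Some k \<Rightarrow> if k \<in> K then f k else 0"
  show "0 \<le> ?h x" for x
    using assms by (auto split: option.split)
  have "(\<integral>\<^sup>+x. ennreal (?h x) \<partial>count_space UNIV) = (\<Sum>x\<in>insert None (Some ` K). ennreal (?h x))"
    by (rule nn_integral_count_space') (use assms(1) in \<open>auto split: option.split\<close>)
  also have "\<dots> = ennreal (\<Sum>x\<in>insert None (Some ` K). ?h x)"
    using assms by (intro sum_ennreal) (auto split: option.split)
  also have "(\<Sum>x\<in>insert None (Some ` K). ?h x) = ?h None + (\<Sum>k\<in>K. f k)"
    using assms(1) by (simp add: sum.reindex)
  finally show "(\<integral>\<^sup>+x. ennreal (?h x) \<partial>count_space UNIV) = 1"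
    by simp
qed

lemma set_pmf_selection_pmf:
  assumes "finite K" and "\<And>k. k \<in> K \<Longrightarrow> f k \<ge> 0" and "(\<Sum>k\<in>K. f k) \<le> 1"
  shows "set_pmf (selection_pmf K f) \<subseteq> insert None (Some ` K)"
proof
  fix x
  assume "x \<in> set_pmf (selection_pmf K f)"
  then show "x \<in> insert None (Some ` K)"
    using pmf_selection_pmf[OF assms, of x] by (auto simp: set_pmf_eq split: option.splits if_splits)
qed

lemma expectation_selection_pmf:
  fixes g :: "'k option \<Rightarrow> real"
  assumes "finite K" and "\<And>k. k \<in> K \<Longrightarrow> f k \<ge> 0" and "(\<Sum>k\<in>K. f k) \<le> 1"
    and "g None = 0"
  shows "measure_pmf.expectation (selection_pmf K f) g = (\<Sum>k\<in>K. f k * g (Some k))"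
proof -
  have "measure_pmf.expectation (selection_pmf K f) g =
        (\<Sum>x\<in>Some ` K. pmf (selection_pmf K f) x *\<^sub>R g x)"
    using assms set_pmf_selection_pmf[OF assms(1-3)] by (intro integral_measure_pmf) auto
  then show ?thesis
    by (simp add: sum.reindex pmf_selection_pmf[OF assms(1-3)])
qed

lemma prob_Pi_pmf_sum_ge_eq_0:
  fixes g :: "'i \<Rightarrow> 'a \<Rightarrow> real"
  assumes I: "finite I"
    and range: "\<And>i x. i \<in> I \<Longrightarrow> x \<in> set_pmf (p i) \<Longrightarrow> g i x \<in> {0..c i}"
    and "(\<Sum>i\<in>I. (c i)\<^sup>2) \<le> 0" and "a > 0"
  shows "measure_pmf.prob (Pi_pmf I dflt p) {\<omega>. a \<le> (\<Sum>i\<in>I. g i (\<omega> i))} = 0"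
proof -
  from assms(3) have "(\<Sum>i\<in>I. (c i)\<^sup>2) = 0"
    by (simp add: order_antisym sum_nonneg)
  with I have "c i = 0" if "i \<in> I" for i
    using that by (simp add: sum_nonneg_eq_0_iff)
  with range have "g i x = 0" if "i \<in> I" "x \<in> set_pmf (p i)" for i x
    using that by fastforce
  then have "(\<Sum>i\<in>I. g i (\<omega> i)) = 0" if "\<omega> \<in> set_pmf (Pi_pmf I dflt p)" for \<omega>
    using that set_Pi_pmf_subset'[OF I] by (force simp: PiE_dflt_def)
  then show ?thesis
    using \<open>a > 0\<close> by (auto simp: measure_pmf_zero_iff)
qed

lemma Hoeffding_Pi_pmf_sum_ge:
  fixes g :: "'i \<Rightarrow> 'a \<Rightarrow> real"
  assumes I: "finite I"
    and range: "\<And>i x. i \<in> I \<Longrightarrow> x \<in> set_pmf (p i) \<Longrightarrow> g i x \<in> {0..c i}"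
    and mean: "(\<Sum>i\<in>I. measure_pmf.expectation (p i) (g i)) \<le> D"
    and t: "t \<ge> 0" "D + t > 0"
    and S: "(\<Sum>i\<in>I. (c i)\<^sup>2) \<le> S" "S > 0"
  shows "measure_pmf.prob (Pi_pmf I dflt p) {\<omega>. D + t \<le> (\<Sum>i\<in>I. g i (\<omega> i))}
           \<le> exp (-2 * t\<^sup>2 / S)"
proof (cases "(\<Sum>i\<in>I. (c i)\<^sup>2) = 0")
  case True
  have "measure_pmf.prob (Pi_pmf I dflt p) {\<omega>. D + t \<le> (\<Sum>i\<in>I. g i (\<omega> i))} = 0"
    by (rule prob_Pi_pmf_sum_ge_eq_0[where c = c]) (use I range True t in auto)
  then show ?thesis
    by simp
next
  case False
  let ?P = "Pi_pmf I dflt p"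
  have in_range: "g i (\<omega> i) \<in> {0..c i}" if "\<omega> \<in> set_pmf ?P" "i \<in> I" for \<omega> i
    using that range set_Pi_pmf_subset'[OF I] by (force simp: PiE_dflt_def)
  interpret Hoeffding_ineq "measure_pmf ?P" I "\<lambda>i \<omega>. g i (\<omega> i)" "\<lambda>_. 0" c
    "\<Sum>i\<in>I. measure_pmf.expectation ?P (\<lambda>\<omega>. g i (\<omega> i))"
  proof unfold_locales
    show "prob_space.indep_vars (measure_pmf ?P) (\<lambda>_. borel) (\<lambda>i \<omega>. g i (\<omega> i)) I"
      by (rule prob_space.indep_vars_compose2[OF measure_pmf.prob_space_axioms
            indep_vars_Pi_pmf[OF I]]) auto
  qed (use I in_range in \<open>auto simp: AE_measure_pmf_iff\<close>)
  have "measure_pmf.expectation ?P (\<lambda>\<omega>. g i (\<omega> i)) = measure_pmf.expectation (p i) (g i)"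
    if "i \<in> I" for i
  proof -
    have "measure_pmf.expectation ?P (\<lambda>\<omega>. g i (\<omega> i)) =
          measure_pmf.expectation (map_pmf (\<lambda>\<omega>. \<omega> i) ?P) (g i)"
      by simp
    with that I show ?thesis
      by (simp add: Pi_pmf_component)
  qed
  then have \<mu>: "(\<Sum>i\<in>I. measure_pmf.expectation ?P (\<lambda>\<omega>. g i (\<omega> i))) \<le> D"
    using mean by simp
  define e where "e = D + t - (\<Sum>i\<in>I. measure_pmf.expectation ?P (\<lambda>\<omega>. g i (\<omega> i)))"
  have "t \<le> e"
    using \<mu> by (simp add: e_def)
  have pos: "(\<Sum>i\<in>I. (c i)\<^sup>2) > 0"
    using False by (simp add: order.not_eq_order_implies_strict sum_nonneg)
  have "measure_pmf.prob ?P {\<omega>. D + t \<le> (\<Sum>i\<in>I. g i (\<omega> i))}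
        \<le> exp (-2 * e\<^sup>2 / (\<Sum>i\<in>I. (c i)\<^sup>2))"
    using Hoeffding_ineq_ge[of e] \<open>t \<le> e\<close> t pos by (simp add: e_def)
  also have "\<dots> \<le> exp (-2 * t\<^sup>2 / S)"
    using \<open>t \<le> e\<close> t pos S
    by (simp add: frac_le power_mono)
  finally show ?thesis .
qed

lemma prob_Pi_pmf_sum_ge_sqrt_ln_le:
  fixes g :: "'i \<Rightarrow> 'a \<Rightarrow> real" and N \<Delta> s D :: real
  assumes I: "finite I"
    and range: "\<And>i x. i \<in> I \<Longrightarrow> x \<in> set_pmf (p i) \<Longrightarrow> g i x \<in> {0..c i}"
    and mean: "(\<Sum>i\<in>I. measure_pmf.expectation (p i) (g i)) \<le> D"
    and "D > 0" and "s > 0" and "N \<ge> 1"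
    and var: "(\<Sum>i\<in>I. (c i)\<^sup>2) \<le> \<Delta> * s\<^sup>2"
  shows "measure_pmf.prob (Pi_pmf I dflt p) {\<omega>. D + s * sqrt (2 * \<Delta> * ln N) \<le> (\<Sum>i\<in>I. g i (\<omega> i))}
           \<le> 1 / N ^ 4"
proof -
  have "0 \<le> \<Delta> * s\<^sup>2"
    using var sum_nonneg[of I "\<lambda>i. (c i)\<^sup>2"] by simp
  with \<open>s > 0\<close> consider "\<Delta> = 0" | "\<Delta> > 0"
    by (fastforce simp: zero_le_mult_iff)
  then show ?thesis
  proof cases
    case 1
    have "measure_pmf.prob (Pi_pmf I dflt p)
            {\<omega>. D + s * sqrt (2 * \<Delta> * ln N) \<le> (\<Sum>i\<in>I. g i (\<omega> i))} = 0"
      by (rule prob_Pi_pmf_sum_ge_eq_0[where c = c]) (use I range var 1 \<open>D > 0\<close> in auto)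
    then show ?thesis
      by simp
  next
    case 2
    let ?t = "s * sqrt (2 * \<Delta> * ln N)"
    have "?t \<ge> 0"
      using 2 \<open>s > 0\<close> \<open>N \<ge> 1\<close> by simp
    with \<open>D > 0\<close> have "D + ?t > 0"
      by linarith
    have "measure_pmf.prob (Pi_pmf I dflt p) {\<omega>. D + ?t \<le> (\<Sum>i\<in>I. g i (\<omega> i))}
          \<le> exp (-2 * ?t\<^sup>2 / (\<Delta> * s\<^sup>2))"
      using 2 assms \<open>?t \<ge> 0\<close> \<open>D + ?t > 0\<close> by (intro Hoeffding_Pi_pmf_sum_ge) auto
    also have "-2 * ?t\<^sup>2 / (\<Delta> * s\<^sup>2) = - ln (N ^ 4)"
      using 2 assms by (simp add: power_mult_distrib ln_realpow)
    also have "exp (- ln (N ^ 4)) = 1 / N ^ 4"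
      using \<open>N \<ge> 1\<close> by (simp add: exp_minus inverse_eq_divide)
    finally show ?thesis .
  qed
qed

definition selected_alloc_node ::
  "'i set \<Rightarrow> ('i \<Rightarrow> 't) \<Rightarrow> ('i \<Rightarrow> real) \<Rightarrow> ('k \<Rightarrow> ('i,'v) vmapping) \<Rightarrow> 't \<Rightarrow> 'v
     \<Rightarrow> 'k option \<Rightarrow> real" where
  "selected_alloc_node Vr tr d m \<tau> u x =
     (case x of None \<Rightarrow> 0 | Some k \<Rightarrow> alloc_node Vr tr d (m k) \<tau> u)"

context
  fixes Vr :: "'i set" and d :: "'i \<Rightarrow> real"
  assumes finite_Vr: "finite Vr" and d_nonneg: "\<And>i. i \<in> Vr \<Longrightarrow> d i \<ge> 0"
begin

lemma alloc_node_nonneg: "alloc_node Vr tr d m \<tau> u \<ge> 0"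
  unfolding alloc_node_def using d_nonneg by (intro sum_nonneg) auto

lemma dmax_nonneg: "dmax Vr Vallow d u \<ge> 0"
proof (cases "{i\<in>Vr. u \<in> Vallow i} = {}")
  case False
  then obtain i where "i \<in> Vr" "u \<in> Vallow i"
    by auto
  then have "d i \<le> Max (d ` {i\<in>Vr. u \<in> Vallow i})"
    using finite_Vr by (intro Max_ge) auto
  with d_nonneg[OF \<open>i \<in> Vr\<close>] False show ?thesis
    by (simp add: dmax_def)
qed (simp add: dmax_def)

lemma alloc_node_le_card_mult_dmax:
  assumes "valid_mapping Vr Er Vallow Eallow m"
  shows "alloc_node Vr tr d m \<tau> u \<le> card Vr * dmax Vr Vallow d u"
proof -
  let ?S = "{i\<in>Vr. tr i = \<tau> \<and> fst m i = u}"
  have "d i \<le> dmax Vr Vallow d u" if "i \<in> ?S" for i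
  proof -
    have "i \<in> Vr" "u \<in> Vallow i"
      using that assms by (auto simp: valid_mapping_def)
    then show ?thesis
      using finite_Vr by (auto simp: dmax_def intro!: Max_ge)
  qed
  then have "alloc_node Vr tr d m \<tau> u \<le> card ?S * dmax Vr Vallow d u"
    unfolding alloc_node_def by (intro sum_bounded_above) auto
  also have "\<dots> \<le> card Vr * dmax Vr Vallow d u"
    using finite_Vr dmax_nonneg by (intro mult_right_mono) (auto intro: card_mono)
  finally show ?thesis .
qed

lemma alloc_node_le_Amax_node:
  assumes "valid_mapping Vr Er Vallow Eallow m"
  shows "alloc_node Vr tr d m \<tau> u \<le> Amax_node Vr Er Vallow Eallow tr d \<tau> u"
proof -
  let ?M = "{m. valid_mapping Vr Er Vallow Eallow m}"
  have "?M \<noteq> {}"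
    using assms by blast
  then have "Amax_node Vr Er Vallow Eallow tr d \<tau> u = (SUP m\<in>?M. alloc_node Vr tr d m \<tau> u)"
    unfolding Amax_node_def Let_def by (rule if_not_P)
  moreover have "bdd_above ((\<lambda>m. alloc_node Vr tr d m \<tau> u) ` ?M)"
    using alloc_node_le_card_mult_dmax[of Er Vallow Eallow _ tr \<tau> u]
    by (intro bdd_aboveI[where M = "card Vr * dmax Vr Vallow d u"]) blast
  ultimately show ?thesis
    using assms by (simp only:) (rule cSUP_upper, simp_all)
qed

lemma Amax_node_nonneg: "Amax_node Vr Er Vallow Eallow tr d \<tau> u \<ge> 0"
proof (cases "\<exists>m. valid_mapping Vr Er Vallow Eallow m")
  case True
  then obtain m where "valid_mapping Vr Er Vallow Eallow m"
    by blast
  from alloc_node_nonneg alloc_node_le_Amax_node[OF this] show ?thesis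
    by (rule order.trans)
qed (simp add: Amax_node_def)

lemma Amax_node_le_card_mult_dmax:
  "Amax_node Vr Er Vallow Eallow tr d \<tau> u \<le> card Vr * dmax Vr Vallow d u"
  using alloc_node_le_card_mult_dmax[of Er Vallow Eallow _ tr \<tau> u] dmax_nonneg[of Vallow u]
  by (auto simp: Amax_node_def Let_def intro!: cSUP_least)

lemma Amax_node_sq_le:
  assumes "dmax Vr Vallow d u \<le> b"
  shows "(Amax_node Vr Er Vallow Eallow tr d \<tau> u)\<^sup>2
           \<le> (Amax_node Vr Er Vallow Eallow tr d \<tau> u / dmax Vr Vallow d u)\<^sup>2 * b\<^sup>2"
proof -
  let ?A = "Amax_node Vr Er Vallow Eallow tr d \<tau> u" and ?d = "dmax Vr Vallow d u"
  have "?A \<le> ?A / ?d * b"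
  proof (cases "?d = 0")
    case True
    then have "?A \<le> 0"
      using Amax_node_le_card_mult_dmax[of Er Vallow Eallow tr \<tau> u] by simp
    with True show ?thesis
      by simp
  next
    case False
    with dmax_nonneg[of Vallow u] have "?d > 0"
      by simp
    with assms Amax_node_nonneg[of Er Vallow Eallow tr \<tau> u] show ?thesis
      by (simp add: le_divide_eq mult_left_mono)
  qed
  with Amax_node_nonneg[of Er Vallow Eallow tr \<tau> u] show ?thesis
    by (metis power_mono power_mult_distrib)
qed

lemma selected_alloc_node_in_range:
  assumes "finite K" and "\<And>k. k \<in> K \<Longrightarrow> f k \<ge> 0" and "(\<Sum>k\<in>K. f k) \<le> 1"
    and "\<And>k. k \<in> K \<Longrightarrow> valid_mapping Vr Er Vallow Eallow (m k)"
    and "x \<in> set_pmf (selection_pmf K f)"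
  shows "selected_alloc_node Vr tr d m \<tau> u x \<in> {0..Amax_node Vr Er Vallow Eallow tr d \<tau> u}"
proof (cases x)
  case None
  then show ?thesis
    using Amax_node_nonneg by (simp add: selected_alloc_node_def)
next
  case (Some k)
  with assms(5) set_pmf_selection_pmf[OF assms(1-3)] have "k \<in> K"
    by auto
  then show ?thesis
    using Some alloc_node_nonneg[of tr "m k"] alloc_node_le_Amax_node[OF assms(4)]
    by (simp add: selected_alloc_node_def)
qed

end

lemma expectation_selected_alloc_node:
  assumes "finite K" and "\<And>k. k \<in> K \<Longrightarrow> f k \<ge> 0" and "(\<Sum>k\<in>K. f k) \<le> 1"
  shows "measure_pmf.expectation (selection_pmf K f) (selected_alloc_node Vr tr d m \<tau> u)
           = (\<Sum>k\<in>K. f k * alloc_node Vr tr d (m k) \<tau> u)"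
  using assms by (simp add: expectation_selection_pmf selected_alloc_node_def)

theorem lemma22:
  fixes VS :: "'v set" and ES :: "('v \<times> 'v) set" and T :: "'t set"
    and VT :: "'t \<Rightarrow> 'v set"
    and dSn :: "'t \<Rightarrow> 'v \<Rightarrow> real" and dSe :: "'v \<Rightarrow> 'v \<Rightarrow> real"
    and R :: "'r set" and Vr :: "'r \<Rightarrow> 'i set" and Er :: "'r \<Rightarrow> ('i \<times> 'i) set"
    and tr :: "'r \<Rightarrow> 'i \<Rightarrow> 't"
    and drn :: "'r \<Rightarrow> 'i \<Rightarrow> real" and dre :: "'r \<Rightarrow> 'i \<times> 'i \<Rightarrow> real"
    and Vallow :: "'r \<Rightarrow> 'i \<Rightarrow> 'v set" and Eallow :: "'r \<Rightarrow> 'i \<times> 'i \<Rightarrow> ('v \<times> 'v) set"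
    and K :: "'r \<Rightarrow> 'k set" and f :: "'r \<Rightarrow> 'k \<Rightarrow> real"
    and m :: "'r \<Rightarrow> 'k \<Rightarrow> ('i,'v) vmapping"
    and \<tau> :: 't and u :: 'v and \<epsilon> :: real
  assumes finVS: "finite VS" and finT: "finite T"
    and ES_sub: "ES \<subseteq> VS \<times> VS"
    and VT_sub: "\<And>t. t \<in> T \<Longrightarrow> VT t \<subseteq> VS"
    and dSn_pos: "\<And>t v. t \<in> T \<Longrightarrow> v \<in> VT t \<Longrightarrow> dSn t v > 0"
    and dSe_pos: "\<And>a b. (a, b) \<in> ES \<Longrightarrow> dSe a b > 0"
    and finR: "finite R"
    and finVr: "\<And>r. r \<in> R \<Longrightarrow> finite (Vr r)"
    and Er_sub: "\<And>r. r \<in> R \<Longrightarrow> Er r \<subseteq> Vr r \<times> Vr r"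
    and tr_T: "\<And>r i. r \<in> R \<Longrightarrow> i \<in> Vr r \<Longrightarrow> tr r i \<in> T"
    and drn_nonneg: "\<And>r i. r \<in> R \<Longrightarrow> i \<in> Vr r \<Longrightarrow> drn r i \<ge> 0"
    and dre_nonneg: "\<And>r e. r \<in> R \<Longrightarrow> e \<in> Er r \<Longrightarrow> dre r e \<ge> 0"
    and Vallow_sub: "\<And>r i. r \<in> R \<Longrightarrow> i \<in> Vr r \<Longrightarrow> Vallow r i \<subseteq> VT (tr r i)"
    and Eallow_sub: "\<And>r e. r \<in> R \<Longrightarrow> e \<in> Er r \<Longrightarrow> Eallow r e \<subseteq> ES"
    and finK: "\<And>r. r \<in> R \<Longrightarrow> finite (K r)"
    and f_pos: "\<And>r k. r \<in> R \<Longrightarrow> k \<in> K r \<Longrightarrow> f r k > 0"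
    and m_valid: "\<And>r k. r \<in> R \<Longrightarrow> k \<in> K r \<Longrightarrow>
                    valid_mapping (Vr r) (Er r) (Vallow r) (Eallow r) (m r k)"
    and f_sum: "\<And>r. r \<in> R \<Longrightarrow> (\<Sum>k\<in>K r. f r k) \<le> 1"
    and cap_node: "\<And>t v. t \<in> T \<Longrightarrow> v \<in> VT t \<Longrightarrow>
         (\<Sum>r\<in>R. \<Sum>k\<in>K r. f r k * alloc_node (Vr r) (tr r) (drn r) (m r k) t v) \<le> dSn t v"
    and cap_edge: "\<And>a b. (a, b) \<in> ES \<Longrightarrow>
         (\<Sum>r\<in>R. \<Sum>k\<in>K r. f r k * alloc_edge (Er r) (dre r) (m r k) a b) \<le> dSe a b"
    and res: "\<tau> \<in> T" "u \<in> VT \<tau>"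
    and eps: "0 < \<epsilon>" "\<epsilon> \<le> 1"
    and eps_bound: "\<And>r. r \<in> R \<Longrightarrow> dmax (Vr r) (Vallow r) (drn r) u / dSn \<tau> u \<le> \<epsilon>"
  shows
    "let \<Delta> = (\<Sum>r\<in>R. (Amax_node (Vr r) (Er r) (Vallow r) (Eallow r) (tr r) (drn r) \<tau> u
                         / dmax (Vr r) (Vallow r) (drn r) u)\<^sup>2);
         N = real (card VS * card T);
         \<beta> = 1 + \<epsilon> * sqrt (2 * \<Delta> * ln N);
         A = (\<lambda>\<omega>. \<Sum>r\<in>R. case \<omega> r of None \<Rightarrow> 0
                 | Some k \<Rightarrow> alloc_node (Vr r) (tr r) (drn r) (m r k) \<tau> u)
     in measure_pmf.prob (Pi_pmf R None (\<lambda>r. selection_pmf (K r) (f r)))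
          {\<omega>. A \<omega> \<ge> \<beta> * dSn \<tau> u} \<le> 1 / N ^ 4"
proof -
  define P where "P = Pi_pmf R None (\<lambda>r. selection_pmf (K r) (f r))"
  define g where "g r = selected_alloc_node (Vr r) (tr r) (drn r) (m r) \<tau> u" for r
  define Am where "Am r = Amax_node (Vr r) (Er r) (Vallow r) (Eallow r) (tr r) (drn r) \<tau> u" for r
  define \<Delta> where "\<Delta> = (\<Sum>r\<in>R. (Am r / dmax (Vr r) (Vallow r) (drn r) u)\<^sup>2)"
  define N where "N = real (card VS * card T)"
  define D where "D = dSn \<tau> u"
  have f_nonneg: "f r k \<ge> 0" if "r \<in> R" "k \<in> K r" for r k
    using f_pos[OF that] by simp
  have "card VS * card T > 0"
    using res VT_sub finVS finT by (auto simp: card_gt_0_iff)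
  then have N: "N \<ge> 1"
    unfolding N_def by (metis One_nat_def Suc_leI of_nat_1 of_nat_le_iff)
  have D: "D > 0"
    using dSn_pos res by (simp add: D_def)
  have range: "g r x \<in> {0..Am r}" if "r \<in> R" "x \<in> set_pmf (selection_pmf (K r) (f r))" for r x
    unfolding g_def Am_def using that finVr drn_nonneg finK f_nonneg f_sum m_valid
    by (intro selected_alloc_node_in_range) auto
  have mean: "(\<Sum>r\<in>R. measure_pmf.expectation (selection_pmf (K r) (f r)) (g r)) \<le> D"
    using cap_node[OF res] finK f_nonneg f_sum
    by (simp add: g_def D_def expectation_selected_alloc_node)
  have var: "(\<Sum>r\<in>R. (Am r)\<^sup>2) \<le> \<Delta> * (\<epsilon> * D)\<^sup>2"
    unfolding \<Delta>_def sum_distrib_right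
  proof (rule sum_mono)
    fix r
    assume r: "r \<in> R"
    have dmax_le: "dmax (Vr r) (Vallow r) (drn r) u \<le> \<epsilon> * D"
      using eps_bound[OF r] D by (simp add: D_def divide_le_eq)
    show "(Am r)\<^sup>2 \<le> (Am r / dmax (Vr r) (Vallow r) (drn r) u)\<^sup>2 * (\<epsilon> * D)\<^sup>2"
      unfolding Am_def
      by (rule Amax_node_sq_le[where d = "drn r", OF finVr[OF r] drn_nonneg[OF r] dmax_le])
  qed
  have "measure_pmf.prob P {\<omega>. D + \<epsilon> * D * sqrt (2 * \<Delta> * ln N) \<le> (\<Sum>r\<in>R. g r (\<omega> r))}
        \<le> 1 / N ^ 4"
    unfolding P_def using finR range mean D eps N var
    by (intro prob_Pi_pmf_sum_ge_sqrt_ln_le) auto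
  moreover have "(1 + \<epsilon> * sqrt (2 * \<Delta> * ln N)) * D = D + \<epsilon> * D * sqrt (2 * \<Delta> * ln N)"
    by (simp add: algebra_simps)
  ultimately show ?thesis
    by (simp add: Let_def P_def g_def Am_def \<Delta>_def N_def D_def selected_alloc_node_def)
qed

end
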